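(* Let $H$, $L$ be as in the context and let $(S,\mathcal T_0)$ be any feasible solution. Then $d(S,\mathcal T_0)\le d_{UB}:=\lfloor L/\omega(H)\rfloor$.
   Context: Notation: $[n)=\{0,1,\dots,n-1\}$. Let $M,N,Z$ be positive integers and let $H$ be a binary $MZ\times NZ$ matrix made of $M\times N$ blocks, each a $Z\times Z$ circulant; assume $H$ has no zero row and no two identical rows. For $\mathcal A\subseteq[MZ)$, $H_{\mathcal A}$ is the submatrix of rows indexed by $\mathcal A$ (in increasing order); $\omega(A)$ is the maximum Hamming weight of a column of $A$ (with $\omega$ of the empty matrix equal to $0$). For $i\in[MZ)$ and integer $s$, $\pi^s(i)=Z\lfloor i/Z\rfloor+((i+s)\bmod Z)$ and $\pi^s(\mathcal T)=\{\pi^s(x):x\in\mathcal T\}$. Fix an integer $L>1$. A pair $(S,\mathcal T_0)$ ($S$ a positive integer, $\mathcal T_0\subseteq[MZ)$) is a feasible solution if, with $\mathcal T_l=\pi^{lS}(\mathcal T_0)$ for $l\in[L)$, the sets $\mathcal T_0,\dots,\mathcal T_{L-1}$ are pairwise disjoint with union $[MZ)$. The layer distance $d(S,\mathcal T_0)$ is the largest $l\in[L)$ such that the matrix obtained by stacking $H_{\mathcal T_0},\dots,H_{\mathcal T_{l-1}}$ vertically has maximum column weight at most $1$ (for $l=0$ the stack is empty). *)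

theory Defs
  imports Main
begin

text \<open>A binary MZ x NZ matrix is modelled as H :: nat => nat => bool,
  entry (i,j) meaningful for i < M*Z, j < N*Z (True = 1).\<close>

definition pi_shift :: "nat \<Rightarrow> int \<Rightarrow> nat \<Rightarrow> nat" where
  "pi_shift Z s i = Z * (i div Z) + nat ((int i + s) mod int Z)"

text \<open>H consists of M x N blocks, each a Z x Z circulant:
  entry (r,c) of a block equals entry ((r+1) mod Z, (c+1) mod Z).\<close>
definition block_circulant :: "nat \<Rightarrow> nat \<Rightarrow> nat \<Rightarrow> (nat \<Rightarrow> nat \<Rightarrow> bool) \<Rightarrow> bool" where
  "block_circulant M N Z H \<longleftrightarrow>
     (\<forall>i < M * Z. \<forall>j < N * Z. H (pi_shift Z 1 i) (pi_shift Z 1 j) = H i j)"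

definition no_zero_row :: "nat \<Rightarrow> nat \<Rightarrow> nat \<Rightarrow> (nat \<Rightarrow> nat \<Rightarrow> bool) \<Rightarrow> bool" where
  "no_zero_row M N Z H \<longleftrightarrow> (\<forall>i < M * Z. \<exists>j < N * Z. H i j)"

definition distinct_rows :: "nat \<Rightarrow> nat \<Rightarrow> nat \<Rightarrow> (nat \<Rightarrow> nat \<Rightarrow> bool) \<Rightarrow> bool" where
  "distinct_rows M N Z H \<longleftrightarrow>
     (\<forall>i < M * Z. \<forall>i' < M * Z. i \<noteq> i' \<longrightarrow> (\<exists>j < N * Z. H i j \<noteq> H i' j))"

definition omega :: "nat \<Rightarrow> nat \<Rightarrow> (nat \<Rightarrow> nat \<Rightarrow> bool) \<Rightarrow> nat set \<Rightarrow> nat" where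
  "omega N Z H A = Max ({0} \<union> {card {i \<in> A. H i j} | j. j < N * Z})"

definition layer :: "nat \<Rightarrow> nat \<Rightarrow> nat set \<Rightarrow> nat \<Rightarrow> nat set" where
  "layer Z S T0 l = pi_shift Z (int (l * S)) ` T0"

definition feasible :: "nat \<Rightarrow> nat \<Rightarrow> nat \<Rightarrow> nat \<Rightarrow> nat set \<Rightarrow> bool" where
  "feasible M Z L S T0 \<longleftrightarrow> S > 0 \<and> T0 \<subseteq> {..< M * Z} \<and>
     (\<forall>l < L. \<forall>l' < L. l \<noteq> l' \<longrightarrow> layer Z S T0 l \<inter> layer Z S T0 l' = {}) \<and>
     (\<Union>l < L. layer Z S T0 l) = {..< M * Z}"

text \<open>Maximum column weight of the vertical stack H_{T_0}; ...; H_{T_{l-1}}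
  (column weight of a stack = sum of the column weights of its pieces).\<close>
definition stack_weight :: "nat \<Rightarrow> nat \<Rightarrow> (nat \<Rightarrow> nat \<Rightarrow> bool) \<Rightarrow> nat \<Rightarrow> nat set \<Rightarrow> nat \<Rightarrow> nat" where
  "stack_weight N Z H S T0 l =
     Max ({0} \<union> {(\<Sum>k < l. card {i \<in> layer Z S T0 k. H i j}) | j. j < N * Z})"

definition layer_distance :: "nat \<Rightarrow> nat \<Rightarrow> nat \<Rightarrow> (nat \<Rightarrow> nat \<Rightarrow> bool) \<Rightarrow> nat \<Rightarrow> nat set \<Rightarrow> nat" where
  "layer_distance N Z L H S T0 = (GREATEST l. l < L \<and> stack_weight N Z H S T0 l \<le> 1)"

end

theory Submission imports Defs begin

text \<open>Let \<open>j\<^sub>0\<close> be a column of maximal weight \<open>w = \<omega>(H)\<close> and \<open>d\<close> the layer distance.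
  Shifting rows and columns simultaneously by \<open>\<pi>\<^sup>s\<close> leaves \<open>H\<close> unchanged, so the weight of
  column \<open>j\<^sub>0\<close> in the \<open>d\<close> consecutive layers starting at \<open>T\<^sub>l\<close> equals the weight of some
  column in the first \<open>d\<close> layers, which is at most 1. The layers are \<open>L\<close>-periodic, so summing
  these windows over \<open>l < L\<close> counts every layer \<open>d\<close> times and gives \<open>d w \<le> L\<close>.\<close>

abbreviation column_weight :: "(nat \<Rightarrow> nat \<Rightarrow> bool) \<Rightarrow> nat set \<Rightarrow> nat \<Rightarrow> nat" where
  "column_weight H A j \<equiv> card {i \<in> A. H i j}"

lemma pi_shift_pi_shift:
  assumes "Z > 0"
  shows "pi_shift Z a (pi_shift Z b i) = pi_shift Z (a + b) i"
proof -
  define r where "r = nat ((int i + b) mod int Z)"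
  have r: "r < Z" "int r = (int i + b) mod int Z"
    using assms by (auto simp: r_def nat_less_iff)
  have "int (Z * (i div Z) + r) + a = int r + a + int (i div Z) * int Z"
    by simp
  then have "(int (Z * (i div Z) + r) + a) mod int Z = (int r + a) mod int Z"
    by (simp only: mod_mult_self1)
  also have "\<dots> = (int i + (a + b)) mod int Z"
    by (simp add: r(2) mod_add_left_eq mod_add_right_eq algebra_simps)
  finally show ?thesis
    using r(1) by (simp add: pi_shift_def r_def[symmetric])
qed

lemma pi_shift_0 [simp]: "pi_shift Z 0 i = i"
  unfolding pi_shift_def by (simp flip: of_nat_mod)

lemma pi_shift_less:
  assumes "i < n * Z"
  shows "pi_shift Z s i < n * Z"
proof -
  have Z: "Z > 0" using assms by (cases Z) auto
  have "nat ((int i + s) mod int Z) < Z" using Z by (simp add: nat_less_iff)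
  moreover have "Z * (i div Z) + Z \<le> n * Z"
    using assms Z by (metis Suc_leI div_less_iff_less_mult mult.commute mult_Suc_right
        mult_le_mono1 add.commute)
  ultimately show ?thesis unfolding pi_shift_def by linarith
qed

lemma pi_shift_inverse:
  assumes "Z > 0"
  shows "pi_shift Z (- s) (pi_shift Z s i) = i"
  using pi_shift_pi_shift[OF assms] by simp

lemma inj_pi_shift: "Z > 0 \<Longrightarrow> inj (pi_shift Z s)"
  by (metis pi_shift_inverse injI)

lemma pi_shift_image_lessThan:
  assumes "Z > 0"
  shows "pi_shift Z s ` {..<n * Z} = {..<n * Z}"
  by (rule endo_inj_surj) (auto simp: pi_shift_less intro: inj_on_subset[OF inj_pi_shift[OF assms]])

lemma pi_shift_eq_funpow:
  assumes "Z > 0"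
  shows "pi_shift Z s = pi_shift Z 1 ^^ nat (s mod int Z)"
proof -
  have "pi_shift Z (int n) = pi_shift Z 1 ^^ n" for n
  proof (induction n)
    case (Suc n)
    have "pi_shift Z (int (Suc n)) i = pi_shift Z 1 (pi_shift Z (int n) i)" for i
      using pi_shift_pi_shift[OF assms, of 1 "int n" i] by (simp add: add.commute)
    with Suc show ?case by (simp add: fun_eq_iff)
  qed (simp add: fun_eq_iff)
  moreover have "pi_shift Z s = pi_shift Z (s mod int Z)"
    unfolding pi_shift_def by (auto simp: fun_eq_iff mod_add_right_eq)
  moreover have "int (nat (s mod int Z)) = s mod int Z"
    using assms by simp
  ultimately show ?thesis
    by metis
qed

lemma block_circulant_shift:
  assumes "Z > 0" and "block_circulant M N Z H" and "i < M * Z" and "j < N * Z"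
  shows "H (pi_shift Z s i) (pi_shift Z s j) = H i j"
proof -
  let ?f = "pi_shift Z 1"
  have "H ((?f ^^ n) i) ((?f ^^ n) j) = H i j" if "i < M * Z" "j < N * Z" for n i j
    using that
  proof (induction n arbitrary: i j)
    case (Suc n)
    have "H ((?f ^^ n) (?f i)) ((?f ^^ n) (?f j)) = H (?f i) (?f j)"
      using Suc.prems by (intro Suc.IH) (simp_all add: pi_shift_less)
    also have "\<dots> = H i j"
      using assms(2) Suc.prems unfolding block_circulant_def by blast
    finally show ?case
      by (simp only: funpow_Suc_right o_apply)
  qed simp
  with assms(3,4) show ?thesis
    unfolding pi_shift_eq_funpow[OF assms(1), of s] by blast
qed

lemma layer_add:
  assumes "Z > 0"
  shows "layer Z S T0 (k + l) = pi_shift Z (int (l * S)) ` layer Z S T0 k"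
  unfolding layer_def image_image pi_shift_pi_shift[OF assms] by (simp add: algebra_simps)

lemma layer_subset:
  assumes "T0 \<subseteq> {..<M * Z}"
  shows "layer Z S T0 l \<subseteq> {..<M * Z}"
  unfolding layer_def
proof (rule image_subsetI)
  fix i assume "i \<in> T0"
  with assms show "pi_shift Z (int (l * S)) i \<in> {..<M * Z}"
    by (simp add: pi_shift_less subset_eq)
qed

lemma partition_part_eq_diff:
  assumes "\<And>l l'. l \<in> I \<Longrightarrow> l' \<in> I \<Longrightarrow> l \<noteq> l' \<Longrightarrow> A l \<inter> A l' = {}"
    and "(\<Union>l\<in>I. A l) = U" and "k \<in> I"
  shows "A k = U - (\<Union>l\<in>I - {k}. A l)"
proof
  show "A k \<subseteq> U - (\<Union>l\<in>I - {k}. A l)"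
    using assms by auto
  show "U - (\<Union>l\<in>I - {k}. A l) \<subseteq> A k"
    using assms(2) by auto
qed

text \<open>Applying \<open>\<pi>\<^sup>S\<close> to the partition \<open>T_0, \<dots>, T_(L-1)\<close> gives the partition
  \<open>T_1, \<dots>, T_L\<close>; both leave the same complement of \<open>T_1 \<union> \<dots> \<union> T_(L-1)\<close>, so \<open>T_L = T_0\<close>.\<close>

lemma layer_periodic:
  assumes Z: "Z > 0" and L: "L > 0" and feasible: "feasible M Z L S T0"
  shows "layer Z S T0 (l + L) = layer Z S T0 l"
proof -
  let ?T = "layer Z S T0" and ?p = "pi_shift Z (int S)" and ?U = "{..<M * Z}"
  have disjoint: "\<And>l l'. l \<in> {..<L} \<Longrightarrow> l' \<in> {..<L} \<Longrightarrow> l \<noteq> l' \<Longrightarrow> ?T l \<inter> ?T l' = {}"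
    and cover: "(\<Union>l\<in>{..<L}. ?T l) = ?U"
    using feasible unfolding feasible_def by auto
  have T_Suc: "?T (Suc l) = ?p ` ?T l" for l
    using layer_add[OF Z, of S T0 l 1] by simp
  have disjoint_Suc: "?T (Suc l) \<inter> ?T (Suc l') = {}"
    if "l \<in> {..<L}" "l' \<in> {..<L}" "l \<noteq> l'" for l l'
    using disjoint[OF that] by (simp add: T_Suc flip: image_Int[OF inj_pi_shift[OF Z]])
  have "(\<Union>l\<in>{..<L}. ?T (Suc l)) = ?p ` (\<Union>l\<in>{..<L}. ?T l)"
    by (simp add: T_Suc image_UN)
  then have cover_Suc: "(\<Union>l\<in>{..<L}. ?T (Suc l)) = ?U"
    by (simp add: cover pi_shift_image_lessThan[OF Z])
  obtain m where m: "L = Suc m"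
    using L gr0_conv_Suc by blast
  have without_last: "{..<Suc m} - {m} = {..<m}"
    by auto
  have without_first: "{..<Suc m} - {0} = Suc ` {..<m}"
    unfolding lessThan_Suc_eq_insert_0 by auto
  have "?T L = ?U - (\<Union>l\<in>{..<m}. ?T (Suc l))"
    using partition_part_eq_diff[where A = "\<lambda>l. ?T (Suc l)", OF disjoint_Suc cover_Suc, of m]
    by (simp add: m without_last)
  also have "\<dots> = ?T 0"
    using partition_part_eq_diff[OF disjoint cover, of 0] by (simp add: m without_first)
  finally show ?thesis
    using layer_add[OF Z, of S T0 L l] layer_add[OF Z, of S T0 0 l] by (simp add: add.commute)
qed

lemma column_weight_layer_shift:
  assumes Z: "Z > 0" and circulant: "block_circulant M N Z H"
    and T0: "T0 \<subseteq> {..<M * Z}" and j: "j < N * Z"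
  shows "column_weight H (layer Z S T0 (k + l)) j
       = column_weight H (layer Z S T0 k) (pi_shift Z (- int (l * S)) j)"
proof -
  let ?p = "pi_shift Z (int (l * S))" and ?j = "pi_shift Z (- int (l * S)) j"
  have "?p ?j = j"
    by (simp add: pi_shift_pi_shift[OF Z])
  then have "H (?p i) j = H i ?j" if "i \<in> layer Z S T0 k" for i
    using block_circulant_shift[OF Z circulant, of i ?j "int (l * S)"] layer_subset[OF T0] that
      pi_shift_less[OF j] by (metis lessThan_iff subsetD)
  then have "{i \<in> layer Z S T0 (k + l). H i j} = ?p ` {i \<in> layer Z S T0 k. H i ?j}"
    unfolding layer_add[OF Z] by auto
  then show ?thesis
    by (simp add: card_image inj_on_subset[OF inj_pi_shift[OF Z]])
qed

lemma column_weight_sum_layers: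
  assumes "feasible M Z L S T0"
  shows "(\<Sum>l<L. column_weight H (layer Z S T0 l) j) = column_weight H {..<M * Z} j"
proof -
  have T0: "T0 \<subseteq> {..<M * Z}"
    and disjoint: "\<And>l l'. l < L \<Longrightarrow> l' < L \<Longrightarrow> l \<noteq> l' \<Longrightarrow> layer Z S T0 l \<inter> layer Z S T0 l' = {}"
    and cover: "(\<Union>l<L. layer Z S T0 l) = {..<M * Z}"
    using assms unfolding feasible_def by auto
  have "{i \<in> {..<M * Z}. H i j} = (\<Union>l<L. {i \<in> layer Z S T0 l. H i j})"
    using cover by blast
  moreover have "finite {i \<in> layer Z S T0 l. H i j}" for l
    by (rule finite_subset[OF _ finite_lessThan]) (use layer_subset[OF T0] in blast)
  ultimately show ?thesis
    using disjoint by (simp add: card_UN_disjoint disjoint_iff)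
qed

lemma omega_pos:
  assumes "finite A" and "i \<in> A" and "j < N * Z" and "H i j"
  shows "0 < omega N Z H A"
proof -
  have "0 < column_weight H A j"
    using assms by (auto simp: card_gt_0_iff)
  also have "\<dots> \<le> omega N Z H A"
    unfolding omega_def by (rule Max_ge) (use assms(3) in auto)
  finally show ?thesis .
qed

lemma omega_attained:
  assumes "0 < omega N Z H A"
  shows "\<exists>j < N * Z. omega N Z H A = column_weight H A j"
proof -
  have "omega N Z H A \<in> {0} \<union> {column_weight H A j | j. j < N * Z}"
    unfolding omega_def by (rule Max_in) auto
  with assms show ?thesis
    by auto
qed

lemma stack_weight_ge:
  assumes "j < N * Z"
  shows "(\<Sum>k<l. column_weight H (layer Z S T0 k) j) \<le> stack_weight N Z H S T0 l"
  unfolding stack_weight_def by (rule Max_ge) (use assms in auto)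

lemma stack_weight_layer_distance:
  assumes "L > 0"
  shows "stack_weight N Z H S T0 (layer_distance N Z L H S T0) \<le> 1"
proof -
  have "stack_weight N Z H S T0 0 = 0"
    unfolding stack_weight_def by (subst Un_absorb2) auto
  with assms have "\<exists>l. l < L \<and> stack_weight N Z H S T0 l \<le> 1"
    by auto
  then have "layer_distance N Z L H S T0 < L
      \<and> stack_weight N Z H S T0 (layer_distance N Z L H S T0) \<le> 1"
    unfolding layer_distance_def by (metis (no_types, lifting) GreatestI_nat less_imp_le)
  then show ?thesis
    by simp
qed

lemma sum_periodic_shift:
  fixes g :: "nat \<Rightarrow> 'a::comm_monoid_add"
  assumes "\<And>l. g (l + L) = g l"
  shows "(\<Sum>l<L. g (k + l)) = (\<Sum>l<L. g l)"
proof (cases L)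
  case (Suc n)
  show ?thesis
  proof (induction k)
    case (Suc k)
    have "(\<Sum>l<L. g (Suc k + l)) = (\<Sum>l<n. g (Suc k + l)) + g (k + L)"
      by (simp add: \<open>L = Suc n\<close>)
    also have "\<dots> = g k + (\<Sum>l<n. g (Suc k + l))"
      using assms[of k] by (simp add: add.commute)
    also have "\<dots> = (\<Sum>l<L. g (k + l))"
      unfolding \<open>L = Suc n\<close> sum.lessThan_Suc_shift by simp
    finally show ?case
      using Suc.IH by simp
  qed simp
qed simp

lemma periodic_window_sum_bound:
  fixes f :: "nat \<Rightarrow> nat"
  assumes periodic: "\<And>l. f (l + L) = f l"
    and window: "\<And>l. l < L \<Longrightarrow> (\<Sum>k<d. f (k + l)) \<le> c"
  shows "d * (\<Sum>l<L. f l) \<le> c * L"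
proof -
  have "d * (\<Sum>l<L. f l) = (\<Sum>k<d. \<Sum>l<L. f (k + l))"
    using sum_periodic_shift[of f, OF periodic] by simp
  also have "\<dots> = (\<Sum>l<L. \<Sum>k<d. f (k + l))"
    by (rule sum.swap)
  also have "\<dots> \<le> (\<Sum>l<L. c)"
    using window by (intro sum_mono) simp
  finally show ?thesis
    by (simp add: mult.commute)
qed

lemma layer_window_column_weight_le_1:
  assumes Z: "Z > 0" and circulant: "block_circulant M N Z H"
    and T0: "T0 \<subseteq> {..<M * Z}" and L: "L > 0" and j: "j < N * Z"
  shows "(\<Sum>k<layer_distance N Z L H S T0. column_weight H (layer Z S T0 (k + l)) j) \<le> 1"
    (is "(\<Sum>k<?d. _) \<le> 1")
proof -
  have "(\<Sum>k<?d. column_weight H (layer Z S T0 (k + l)) j)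
      = (\<Sum>k<?d. column_weight H (layer Z S T0 k) (pi_shift Z (- int (l * S)) j))"
    by (simp add: column_weight_layer_shift[OF Z circulant T0 j])
  also have "\<dots> \<le> stack_weight N Z H S T0 ?d"
    by (rule stack_weight_ge) (rule pi_shift_less[OF j])
  also have "\<dots> \<le> 1"
    by (rule stack_weight_layer_distance[OF L])
  finally show ?thesis .
qed

lemma layer_distance_mult_column_weight_le:
  assumes Z: "Z > 0" and circulant: "block_circulant M N Z H"
    and feasible: "feasible M Z L S T0" and L: "L > 0" and j: "j < N * Z"
  shows "layer_distance N Z L H S T0 * column_weight H {..<M * Z} j \<le> L"
proof -
  have T0: "T0 \<subseteq> {..<M * Z}"
    using feasible by (simp add: feasible_def)
  have "layer_distance N Z L H S T0 * (\<Sum>l<L. column_weight H (layer Z S T0 l) j) \<le> 1 * L"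
  proof (rule periodic_window_sum_bound)
    show "column_weight H (layer Z S T0 (l + L)) j = column_weight H (layer Z S T0 l) j" for l
      by (simp add: layer_periodic[OF Z L feasible])
    show "(\<Sum>k<layer_distance N Z L H S T0. column_weight H (layer Z S T0 (k + l)) j) \<le> 1" for l
      by (rule layer_window_column_weight_le_1[OF Z circulant T0 L j])
  qed
  then show ?thesis
    by (simp add: column_weight_sum_layers[OF feasible])
qed

theorem theorem6:
  fixes M N Z L S :: nat and H :: "nat \<Rightarrow> nat \<Rightarrow> bool" and T0 :: "nat set"
  assumes "M > 0" and "N > 0" and "Z > 0" and "L > 1"
    and "block_circulant M N Z H"
    and "no_zero_row M N Z H"
    and "distinct_rows M N Z H"
    and "feasible M Z L S T0"
  shows "layer_distance N Z L H S T0 \<le> L div omega N Z H {..< M * Z}"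
proof -
  have "0 < M * Z"
    using \<open>M > 0\<close> \<open>Z > 0\<close> by simp
  then obtain j where "j < N * Z" "H 0 j"
    using \<open>no_zero_row M N Z H\<close> unfolding no_zero_row_def by blast
  with \<open>0 < M * Z\<close> have omega_pos: "0 < omega N Z H {..<M * Z}"
    by (intro omega_pos[of "{..<M * Z}" 0]) auto
  then obtain j0 where "j0 < N * Z" "omega N Z H {..<M * Z} = column_weight H {..<M * Z} j0"
    using omega_attained by blast
  with layer_distance_mult_column_weight_le[OF \<open>Z > 0\<close> \<open>block_circulant M N Z H\<close>
      \<open>feasible M Z L S T0\<close>] \<open>L > 1\<close>
  have "layer_distance N Z L H S T0 * omega N Z H {..<M * Z} \<le> L"
    by simp
  with omega_pos show ?thesis
    by (simp add: less_eq_div_iff_mult_less_eq)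
qed

end
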